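(* Let $\Theta$ be a typed signature. For every $\chi\in\mathcal L_{\mathrm{CL}}(P_\Theta)$: $\chi$ is true at every state of every coherent propositional coalition model over $P_\Theta$ iff $\vdash_{\mathrm{CL}_{\mathrm{Coh},\Theta}}\chi$.
   Context: A typed signature is $\Theta=(\mathrm{Ag},X,\{D_x\}_{x\in X})$ with $\mathrm{Ag}$ a finite non-empty set of agents, $X$ a finite set of variables, each $D_x$ finite non-empty. $P_\Theta=\{p_x^c\mid x\in X,c\in D_x\}$ distinct atoms; $\mathcal L_{\mathrm{CL}}(P_\Theta)$: $\chi::=\top\mid p\mid\neg\chi\mid\chi\wedge\chi'\mid[C]\chi$ ($p\in P_\Theta,C\subseteq\mathrm{Ag}$). A propositional coalition model (explicit one-step game form model) is $(S,\{\Sigma_i\}_{i\in\mathrm{Ag}},o,V)$ with $S\neq\varnothing$, each $\Sigma_i\neq\varnothing$, $o:S\times\Sigma_{\mathrm{Ag}}\to S$ where $\Sigma_C=\prod_{i\in C}\Sigma_i$, and $V:P_\Theta\to\mathcal P(S)$; $p$ true at $s$ iff $s\in V(p)$; $[C]\chi$ true at $s$ iff $\exists\alpha_C\in\Sigma_C\,\forall\beta_{\mathrm{Ag}\setminus C}$: $\chi$ true at $o(s,\alpha_C\sqcup\beta)$. It is coherent if every state satisfies $\bigwedge_{x\in X}\bigl((\bigvee_{c\in D_x}p_x^c)\wedge\bigwedge_{c\neq d}(p_x^c\to\neg p_x^d)\bigr)$. $\mathrm{CL}_{\mathrm{Coh},\Theta}$ is the Hilbert system with: all instances of propositional tautologies;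 (C1) $[C](\varphi\wedge\psi)\to[C]\varphi$; (C2) $\neg[C]\bot$; (C3) $[C]\top$; (C4) $[C]\varphi\wedge[D]\psi\to[C\cup D](\varphi\wedge\psi)$ for disjoint $C,D$; (C5) $\neg[\varnothing]\neg\varphi\to[\mathrm{Ag}]\varphi$; $\bigvee_{c\in D_x}p_x^c$ for each $x$; $p_x^c\to\neg p_x^d$ for distinct $c,d\in D_x$; rules MP and RE (from $\vdash\varphi\leftrightarrow\psi$ infer $\vdash[C]\varphi\leftrightarrow[C]\psi$). *)

theory Defs
  imports Main "HOL-Library.Infinite_Typeclass"
begin

text \<open>Typed signature: agents are the (finite, non-empty) type 'ag; X is a finite set of
variables; D x is the finite non-empty domain of variable x.\<close>

definition typed_sig :: "'x set \<Rightarrow> ('x \<Rightarrow> 'c set) \<Rightarrow> bool" where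
  "typed_sig X D \<longleftrightarrow> finite X \<and> (\<forall>x\<in>X. finite (D x) \<and> D x \<noteq> {})"

text \<open>Formulas of coalition logic; atom Atom x c stands for p_x^c.\<close>

datatype ('ag, 'x, 'c) fm =
    Top
  | Atom 'x 'c
  | Neg "('ag, 'x, 'c) fm"
  | And "('ag, 'x, 'c) fm" "('ag, 'x, 'c) fm"
  | Box "'ag set" "('ag, 'x, 'c) fm"

definition Bot :: "('ag, 'x, 'c) fm" where "Bot = Neg Top"
definition Or :: "('ag, 'x, 'c) fm \<Rightarrow> ('ag, 'x, 'c) fm \<Rightarrow> ('ag, 'x, 'c) fm" where
  "Or a b = Neg (And (Neg a) (Neg b))"
definition Imp :: "('ag, 'x, 'c) fm \<Rightarrow> ('ag, 'x, 'c) fm \<Rightarrow> ('ag, 'x, 'c) fm" where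
  "Imp a b = Neg (And a (Neg b))"
definition Iff :: "('ag, 'x, 'c) fm \<Rightarrow> ('ag, 'x, 'c) fm \<Rightarrow> ('ag, 'x, 'c) fm" where
  "Iff a b = And (Imp a b) (Imp b a)"

fun Disj :: "('ag, 'x, 'c) fm list \<Rightarrow> ('ag, 'x, 'c) fm" where
  "Disj [] = Bot"
| "Disj (a # as) = Or a (Disj as)"

text \<open>Formulas of L_CL(P_Theta): all atoms belong to P_Theta.\<close>

fun wf :: "'x set \<Rightarrow> ('x \<Rightarrow> 'c set) \<Rightarrow> ('ag, 'x, 'c) fm \<Rightarrow> bool" where
  "wf X D Top = True"
| "wf X D (Atom x c) = (x \<in> X \<and> c \<in> D x)"
| "wf X D (Neg a) = wf X D a"
| "wf X D (And a b) = (wf X D a \<and> wf X D b)"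
| "wf X D (Box C a) = wf X D a"

text \<open>Instances of propositional tautologies: true under every Boolean assignment to the
maximal non-Boolean subformulas (atoms and coalition formulas).\<close>

fun peval :: "(('ag, 'x, 'c) fm \<Rightarrow> bool) \<Rightarrow> ('ag, 'x, 'c) fm \<Rightarrow> bool" where
  "peval v Top = True"
| "peval v (Atom x c) = v (Atom x c)"
| "peval v (Neg a) = (\<not> peval v a)"
| "peval v (And a b) = (peval v a \<and> peval v b)"
| "peval v (Box C a) = v (Box C a)"

definition taut :: "('ag, 'x, 'c) fm \<Rightarrow> bool" where
  "taut a \<longleftrightarrow> (\<forall>v. peval v a)"

inductive derivable :: "'x set \<Rightarrow> ('x \<Rightarrow> 'c set) \<Rightarrow> ('ag::finite, 'x, 'c) fm \<Rightarrow> bool"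
  for X D where
  Taut: "wf X D a \<Longrightarrow> taut a \<Longrightarrow> derivable X D a"
| C1: "wf X D a \<Longrightarrow> wf X D b \<Longrightarrow> derivable X D (Imp (Box C (And a b)) (Box C a))"
| C2: "derivable X D (Neg (Box C Bot))"
| C3: "derivable X D (Box C Top)"
| C4: "wf X D a \<Longrightarrow> wf X D b \<Longrightarrow> C \<inter> C' = {} \<Longrightarrow>
        derivable X D (Imp (And (Box C a) (Box C' b)) (Box (C \<union> C') (And a b)))"
| C5: "wf X D a \<Longrightarrow> derivable X D (Imp (Neg (Box {} (Neg a))) (Box UNIV a))"
| Ex: "x \<in> X \<Longrightarrow> set cs = D x \<Longrightarrow> derivable X D (Disj (map (Atom x) cs))"
| Uq: "x \<in> X \<Longrightarrow> c \<in> D x \<Longrightarrow> d \<in> D x \<Longrightarrow> c \<noteq> d \<Longrightarrow>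
        derivable X D (Imp (Atom x c) (Neg (Atom x d)))"
| MP: "derivable X D a \<Longrightarrow> derivable X D (Imp a b) \<Longrightarrow> derivable X D b"
| RE: "derivable X D (Iff a b) \<Longrightarrow> derivable X D (Iff (Box C a) (Box C b))"

text \<open>Strategy profiles are total functions 'ag \<Rightarrow> 'a (agents = all of type 'ag).\<close>

definition profile :: "('ag \<Rightarrow> 'a set) \<Rightarrow> ('ag \<Rightarrow> 'a) \<Rightarrow> bool" where
  "profile \<Sigma> \<sigma> \<longleftrightarrow> (\<forall>i. \<sigma> i \<in> \<Sigma> i)"

definition cl_model ::
  "'s set \<Rightarrow> ('ag \<Rightarrow> 'a set) \<Rightarrow> ('s \<Rightarrow> ('ag \<Rightarrow> 'a) \<Rightarrow> 's) \<Rightarrow> ('x \<Rightarrow> 'c \<Rightarrow> 's set) \<Rightarrow> bool" where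
  "cl_model S \<Sigma> out V \<longleftrightarrow> S \<noteq> {} \<and> (\<forall>i. \<Sigma> i \<noteq> {}) \<and>
     (\<forall>s\<in>S. \<forall>\<sigma>. profile \<Sigma> \<sigma> \<longrightarrow> out s \<sigma> \<in> S) \<and> (\<forall>x c. V x c \<subseteq> S)"

fun sat :: "('ag \<Rightarrow> 'a set) \<Rightarrow> ('s \<Rightarrow> ('ag \<Rightarrow> 'a) \<Rightarrow> 's) \<Rightarrow> ('x \<Rightarrow> 'c \<Rightarrow> 's set) \<Rightarrow> 's
    \<Rightarrow> ('ag, 'x, 'c) fm \<Rightarrow> bool" where
  "sat \<Sigma> out V s Top = True"
| "sat \<Sigma> out V s (Atom x c) = (s \<in> V x c)"
| "sat \<Sigma> out V s (Neg a) = (\<not> sat \<Sigma> out V s a)"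
| "sat \<Sigma> out V s (And a b) = (sat \<Sigma> out V s a \<and> sat \<Sigma> out V s b)"
| "sat \<Sigma> out V s (Box C a) =
     (\<exists>\<alpha>. (\<forall>i\<in>C. \<alpha> i \<in> \<Sigma> i) \<and>
        (\<forall>\<beta>. (\<forall>i\<in>-C. \<beta> i \<in> \<Sigma> i) \<longrightarrow>
           sat \<Sigma> out V (out s (\<lambda>i. if i \<in> C then \<alpha> i else \<beta> i)) a))"

definition coherent :: "'x set \<Rightarrow> ('x \<Rightarrow> 'c set) \<Rightarrow> 's set \<Rightarrow> ('x \<Rightarrow> 'c \<Rightarrow> 's set) \<Rightarrow> bool" where
  "coherent X D S V \<longleftrightarrow> (\<forall>s\<in>S. \<forall>x\<in>X.
     (\<exists>c\<in>D x. s \<in> V x c) \<and> (\<forall>c\<in>D x. \<forall>d\<in>D x. c \<noteq> d \<longrightarrow> s \<in> V x c \<longrightarrow> s \<notin> V x d))"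

definition coh_valid :: "'x set \<Rightarrow> ('x \<Rightarrow> 'c set) \<Rightarrow> 's itself \<Rightarrow> 'a itself
    \<Rightarrow> ('ag, 'x, 'c) fm \<Rightarrow> bool" where
  "coh_valid X D TYPE_S TYPE_A a \<longleftrightarrow>
     (\<forall>(S::'s set) (\<Sigma>::'ag \<Rightarrow> 'a set) out V. cl_model S \<Sigma> out V \<and> coherent X D S V \<longrightarrow>
        (\<forall>s\<in>S. sat \<Sigma> out V s a))"

end

theory Submission
  imports Defs "HOL-Library.Countable_Set"
begin

text \<open>For completeness, let \<open>\<chi>\<close> be
  underivable and let \<open>K\<close> consist of the subformulas of \<open>\<chi>\<close> and all atoms \<open>p\<^sub>x\<^sup>c\<close>.
  The states of the canonical model are the atoms of \<open>K\<close>: consistent sets deciding every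
  formula of \<open>K\<close>. A strategy is a pair of numbers. With the first one an agent votes for a
  formula \<open>[C]\<phi>\<close> of the current state, and \<open>\<phi>\<close> is required of the successor once all of \<open>C\<close>
  vote for it; moreover \<open>\<not>\<phi>\<close> is required whenever \<open>[Ag]\<phi>\<close> fails, which C5 turns into
  \<open>[\<emptyset>]\<not>\<phi>\<close>. The coalitions behind the requirements of one profile are disjoint, so C4 and C2
  make the requirements consistent; by monotonicity (C1, C3) they even stay consistent with
  \<open>\<not>\<psi>\<close> if \<open>[C]\<psi>\<close> fails and only members of \<open>C\<close> vote. The second components, summed modulo
  the number of admissible successors, select the outcome, so that a single agent outside \<open>C\<close>
  can steer to a successor refuting \<open>\<psi>\<close>. The truth lemma then refutes \<open>\<chi>\<close> in this finite
  model, which is finally embedded into the given infinite types of states and strategies.\<close>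

section \<open>Soundness\<close>

lemma sat_peval: "peval (sat \<Sigma> out V s) a = sat \<Sigma> out V s a"
  by (induction a) auto

lemma sat_Disj: "sat \<Sigma> out V s (Disj as) \<longleftrightarrow> (\<exists>a\<in>set as. sat \<Sigma> out V s a)"
  by (induction as) (auto simp: Bot_def Or_def)

lemma sat_Imp: "sat \<Sigma> out V s (Imp a b) \<longleftrightarrow> (sat \<Sigma> out V s a \<longrightarrow> sat \<Sigma> out V s b)"
  by (simp add: Imp_def)

lemma sat_Iff: "sat \<Sigma> out V s (Iff a b) \<longleftrightarrow> (sat \<Sigma> out V s a \<longleftrightarrow> sat \<Sigma> out V s b)"
  by (auto simp: Iff_def Imp_def)

lemma cl_model_ex_profile:
  assumes "cl_model S \<Sigma> out V"
  obtains \<sigma> where "\<forall>i. \<sigma> i \<in> \<Sigma> i"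
proof -
  have "\<forall>i. \<exists>a. a \<in> \<Sigma> i" using assms by (auto simp: cl_model_def)
  then show ?thesis using that by (metis choice)
qed

lemma sat_Box_union:
  assumes "C \<inter> C' = {}" and "sat \<Sigma> out V s (Box C a)" and "sat \<Sigma> out V s (Box C' b)"
  shows "sat \<Sigma> out V s (Box (C \<union> C') (And a b))"
proof -
  obtain \<alpha> where \<alpha>: "\<forall>i\<in>C. \<alpha> i \<in> \<Sigma> i"
    "\<And>\<beta>. \<forall>i\<in>-C. \<beta> i \<in> \<Sigma> i \<Longrightarrow> sat \<Sigma> out V (out s (\<lambda>i. if i \<in> C then \<alpha> i else \<beta> i)) a"
    using assms(2) by auto
  obtain \<alpha>' where \<alpha>': "\<forall>i\<in>C'. \<alpha>' i \<in> \<Sigma> i"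
    "\<And>\<beta>. \<forall>i\<in>-C'. \<beta> i \<in> \<Sigma> i \<Longrightarrow> sat \<Sigma> out V (out s (\<lambda>i. if i \<in> C' then \<alpha>' i else \<beta> i)) b"
    using assms(3) by auto
  show ?thesis
    unfolding sat.simps(5)
  proof (intro exI[of _ "\<lambda>i. if i \<in> C then \<alpha> i else \<alpha>' i"] conjI allI impI)
    show "\<forall>i\<in>C \<union> C'. (if i \<in> C then \<alpha> i else \<alpha>' i) \<in> \<Sigma> i" using \<alpha>(1) \<alpha>'(1) by auto
    fix \<beta>
    assume \<beta>: "\<forall>i\<in>-(C \<union> C'). \<beta> i \<in> \<Sigma> i"
    define \<sigma> where "\<sigma> = (\<lambda>i. if i \<in> C \<union> C' then (if i \<in> C then \<alpha> i else \<alpha>' i) else \<beta> i)"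
    have "\<sigma> = (\<lambda>i. if i \<in> C then \<alpha> i else (if i \<in> C' then \<alpha>' i else \<beta> i))"
      by (auto simp: \<sigma>_def)
    then have "sat \<Sigma> out V (out s \<sigma>) a"
      using \<alpha>(2)[of "\<lambda>i. if i \<in> C' then \<alpha>' i else \<beta> i"] \<alpha>'(1) \<beta> by auto
    moreover have "\<sigma> = (\<lambda>i. if i \<in> C' then \<alpha>' i else (if i \<in> C then \<alpha> i else \<beta> i))"
      using assms(1) by (force simp: \<sigma>_def)
    then have "sat \<Sigma> out V (out s \<sigma>) b"
      using \<alpha>'(2)[of "\<lambda>i. if i \<in> C then \<alpha> i else \<beta> i"] \<alpha>(1) \<beta> by auto
    ultimately have "sat \<Sigma> out V (out s \<sigma>) (And a b)" by simp
    then show "sat \<Sigma> out V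
        (out s (\<lambda>i. if i \<in> C \<union> C' then (if i \<in> C then \<alpha> i else \<alpha>' i) else \<beta> i)) (And a b)"
      by (simp only: \<sigma>_def)
  qed
qed

lemma sat_Box_cong:
  assumes "\<And>\<alpha> \<beta>. \<forall>i\<in>C. \<alpha> i \<in> \<Sigma> i \<Longrightarrow> \<forall>i\<in>-C. \<beta> i \<in> \<Sigma> i \<Longrightarrow>
    sat \<Sigma> out V (out s (\<lambda>i. if i \<in> C then \<alpha> i else \<beta> i)) a \<longleftrightarrow>
    sat \<Sigma> out V (out s (\<lambda>i. if i \<in> C then \<alpha> i else \<beta> i)) b"
  shows "sat \<Sigma> out V s (Box C a) \<longleftrightarrow> sat \<Sigma> out V s (Box C b)"
  using assms by (simp only: sat.simps) blast

lemma soundness: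
  assumes "derivable X D a" and "cl_model S \<Sigma> out V" and "coherent X D S V" and "s \<in> S"
  shows "sat \<Sigma> out V s a"
  using assms(1,4)
proof (induction arbitrary: s rule: derivable.induct)
  case (Taut a)
  then show ?case using sat_peval unfolding taut_def by metis
next
  case (C1 a b C)
  then show ?case by (auto simp: sat_Imp)
next
  case (C2 C)
  obtain \<sigma> where "\<forall>i. \<sigma> i \<in> \<Sigma> i" using cl_model_ex_profile[OF assms(2)] .
  then show ?case by (auto simp: Bot_def)
next
  case (C3 C)
  obtain \<sigma> where "\<forall>i. \<sigma> i \<in> \<Sigma> i" using cl_model_ex_profile[OF assms(2)] .
  then show ?case by auto
next
  case (C4 a b C C')
  show ?case unfolding sat_Imp sat.simps(4) using sat_Box_union[OF C4.hyps(3), of \<Sigma> out V s a b] by blast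
next
  case (C5 a)
  then show ?case by (auto simp: sat_Imp)
next
  case (Ex x cs)
  then obtain c where "c \<in> D x" "s \<in> V x c" using assms(3) unfolding coherent_def by blast
  then show ?case using Ex.hyps(2) by (auto simp: sat_Disj)
next
  case (Uq x c d)
  then show ?case using assms(3) unfolding coherent_def by (simp add: sat_Imp)
next
  case (MP a b)
  then show ?case by (simp add: sat_Imp)
next
  case (RE a b C)
  show ?case unfolding sat_Iff
  proof (rule sat_Box_cong)
    fix \<alpha> \<beta>
    assume "\<forall>i\<in>C. \<alpha> i \<in> \<Sigma> i" and "\<forall>i\<in>-C. \<beta> i \<in> \<Sigma> i"
    then have "out s (\<lambda>i. if i \<in> C then \<alpha> i else \<beta> i) \<in> S"
      using assms(2) RE.prems by (auto simp: cl_model_def profile_def)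
    then show "sat \<Sigma> out V (out s (\<lambda>i. if i \<in> C then \<alpha> i else \<beta> i)) a \<longleftrightarrow>
        sat \<Sigma> out V (out s (\<lambda>i. if i \<in> C then \<alpha> i else \<beta> i)) b"
      using RE.IH by (simp add: sat_Iff)
  qed
qed

lemma coh_valid_if_derivable:
  fixes a :: "('ag::finite, 'x, 'c) fm"
  assumes "derivable X D a"
  shows "coh_valid X D TYPE('s) TYPE('a) a"
  unfolding coh_valid_def
proof (intro allI impI ballI)
  fix S :: "'s set" and \<Sigma> :: "'ag \<Rightarrow> 'a set" and out V s
  assume model: "cl_model S \<Sigma> out V \<and> coherent X D S V" and "s \<in> S"
  show "sat \<Sigma> out V s a"
    using soundness[OF assms conjunct1[OF model] conjunct2[OF model] \<open>s \<in> S\<close>] .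
qed

section \<open>Derivations and consistency\<close>

fun Conj :: "('ag, 'x, 'c) fm list \<Rightarrow> ('ag, 'x, 'c) fm" where
  "Conj [] = Top"
| "Conj (a # as) = And a (Conj as)"

lemma peval_Conj: "peval v (Conj as) \<longleftrightarrow> (\<forall>a\<in>set as. peval v a)"
  by (induction as) auto

lemma peval_Disj: "peval v (Disj as) \<longleftrightarrow> (\<exists>a\<in>set as. peval v a)"
  by (induction as) (auto simp: Bot_def Or_def)

lemma wf_Conj: "wf X D (Conj as) \<longleftrightarrow> (\<forall>a\<in>set as. wf X D a)"
  by (induction as) auto

lemma wf_Disj: "wf X D (Disj as) \<longleftrightarrow> (\<forall>a\<in>set as. wf X D a)"
  by (induction as) (auto simp: Bot_def Or_def)

lemma derivable_wf: "derivable X D a \<Longrightarrow> wf X D a"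
  by (induction rule: derivable.induct) (auto simp: Imp_def Bot_def Iff_def wf_Disj)

lemma derivable_taut_consequence:
  assumes "\<forall>d\<in>set ds. derivable X D d" and "wf X D b"
    and "\<forall>v. (\<forall>d\<in>set ds. peval v d) \<longrightarrow> peval v b"
  shows "derivable X D b"
  using assms
proof (induction ds arbitrary: b)
  case Nil
  then show ?case by (auto intro: derivable.Taut simp: taut_def)
next
  case (Cons d ds)
  have "wf X D d" using Cons.prems(1) derivable_wf by auto
  then have "derivable X D (Imp d b)"
    using Cons.IH[of "Imp d b"] Cons.prems by (auto simp: Imp_def)
  then show ?case using Cons.prems(1) derivable.MP by auto
qed

lemma derivable_Box_mono:
  assumes "derivable X D (Imp a b)"
  shows "derivable X D (Imp (Box C a) (Box C b))"
proof -
  have wf: "wf X D a" "wf X D b" using derivable_wf[OF assms] by (auto simp: Imp_def)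
  have "derivable X D (Iff a (And b a))"
    by (rule derivable_taut_consequence[of "[Imp a b]"]) (use assms wf in \<open>auto simp: Iff_def Imp_def\<close>)
  then have "derivable X D (Iff (Box C a) (Box C (And b a)))" by (rule derivable.RE)
  moreover have "derivable X D (Imp (Box C (And b a)) (Box C b))" using derivable.C1[OF wf(2,1)] .
  ultimately show ?thesis
    by (intro derivable_taut_consequence[of "[Iff (Box C a) (Box C (And b a)), Imp (Box C (And b a)) (Box C b)]"])
       (use wf in \<open>auto simp: Iff_def Imp_def\<close>)
qed

definition consistent :: "'x set \<Rightarrow> ('x \<Rightarrow> 'c set) \<Rightarrow> ('ag::finite, 'x, 'c) fm set \<Rightarrow> bool" where
  "consistent X D \<Gamma> \<longleftrightarrow> \<not> (\<exists>as. set as \<subseteq> \<Gamma> \<and> derivable X D (Neg (Conj as)))"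

definition provable_from ::
  "'x set \<Rightarrow> ('x \<Rightarrow> 'c set) \<Rightarrow> ('ag::finite, 'x, 'c) fm set \<Rightarrow> ('ag, 'x, 'c) fm \<Rightarrow> bool" where
  "provable_from X D \<Gamma> a \<longleftrightarrow> (\<exists>as. set as \<subseteq> \<Gamma> \<and> derivable X D (Imp (Conj as) a))"

lemma provable_from_wf: "provable_from X D \<Gamma> a \<Longrightarrow> wf X D a"
  unfolding provable_from_def by (auto dest!: derivable_wf simp: Imp_def)

lemma provable_from_derivable: "derivable X D a \<Longrightarrow> provable_from X D \<Gamma> a"
  unfolding provable_from_def
  by (intro exI[of _ "[]"] conjI derivable_taut_consequence[of "[a]"])
     (auto simp: Imp_def dest: derivable_wf)

lemma provable_from_mem: "a \<in> \<Gamma> \<Longrightarrow> wf X D a \<Longrightarrow> provable_from X D \<Gamma> a"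
  unfolding provable_from_def
  by (intro exI[of _ "[a]"] conjI derivable_taut_consequence[of "[]"]) (auto simp: Imp_def)

lemma provable_from_mp:
  assumes "provable_from X D \<Gamma> a" and "provable_from X D \<Gamma> (Imp a b)"
  shows "provable_from X D \<Gamma> b"
proof -
  obtain as bs where
    as: "set as \<subseteq> \<Gamma>" "derivable X D (Imp (Conj as) a)" and
    bs: "set bs \<subseteq> \<Gamma>" "derivable X D (Imp (Conj bs) (Imp a b))"
    using assms unfolding provable_from_def by blast
  have "derivable X D (Imp (Conj (as @ bs)) b)"
    by (rule derivable_taut_consequence[of "[Imp (Conj as) a, Imp (Conj bs) (Imp a b)]"])
       (use as bs derivable_wf[OF as(2)] derivable_wf[OF bs(2)]
        in \<open>auto simp: Imp_def peval_Conj wf_Conj\<close>)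
  then show ?thesis using as bs unfolding provable_from_def by (intro exI[of _ "as @ bs"]) auto
qed

lemma provable_from_taut_consequence:
  assumes "\<forall>a\<in>set as. provable_from X D \<Gamma> a" and "wf X D b"
    and "\<forall>v. (\<forall>a\<in>set as. peval v a) \<longrightarrow> peval v b"
  shows "provable_from X D \<Gamma> b"
  using assms
proof (induction as arbitrary: b)
  case Nil
  then show ?case using provable_from_derivable derivable_taut_consequence[of "[]" X D b] by auto
next
  case (Cons a as)
  have "wf X D a" using Cons.prems(1) provable_from_wf by auto
  then have "provable_from X D \<Gamma> (Imp a b)"
    using Cons.IH[of "Imp a b"] Cons.prems by (auto simp: Imp_def)
  then show ?case using provable_from_mp Cons.prems(1) by auto
qed

lemma provable_from_Box_mono:
  "derivable X D (Imp a b) \<Longrightarrow> provable_from X D \<Gamma> (Box C a) \<Longrightarrow> provable_from X D \<Gamma> (Box C b)"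
  using provable_from_mp provable_from_derivable derivable_Box_mono by metis

lemma provable_from_Box_union:
  assumes "C \<inter> C' = {}" and "provable_from X D \<Gamma> (Box C a)" and "provable_from X D \<Gamma> (Box C' b)"
  shows "provable_from X D \<Gamma> (Box (C \<union> C') (And a b))"
proof -
  have wf: "wf X D a" "wf X D b" using assms(2,3) provable_from_wf by fastforce+
  have "provable_from X D \<Gamma> (Imp (And (Box C a) (Box C' b)) (Box (C \<union> C') (And a b)))"
    using derivable.C4[OF wf assms(1)] provable_from_derivable by blast
  then show ?thesis
    by (intro provable_from_taut_consequence
          [of "[Box C a, Box C' b, Imp (And (Box C a) (Box C' b)) (Box (C \<union> C') (And a b))]"])
       (use assms wf in \<open>auto simp: Imp_def\<close>)
qed

lemma provable_from_Box_superset: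
  assumes "C \<subseteq> C'" and "provable_from X D \<Gamma> (Box C a)"
  shows "provable_from X D \<Gamma> (Box C' a)"
proof -
  have wf: "wf X D a" using assms(2) provable_from_wf by fastforce
  have "provable_from X D \<Gamma> (Box (C' - C) Top)" using derivable.C3 provable_from_derivable by blast
  then have "provable_from X D \<Gamma> (Box (C \<union> (C' - C)) (And a Top))"
    using provable_from_Box_union assms(2) by blast
  moreover have "C \<union> (C' - C) = C'" using assms(1) by blast
  moreover have "derivable X D (Imp (And a Top) a)"
    by (rule derivable_taut_consequence[of "[]"]) (use wf in \<open>auto simp: Imp_def\<close>)
  ultimately show ?thesis using provable_from_Box_mono by metis
qed

lemma provable_from_Box_Conj:
  assumes "distinct ps" and "pairwise (\<lambda>p q. fst p \<inter> fst q = {}) (set ps)"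
    and "\<forall>(C, a)\<in>set ps. provable_from X D \<Gamma> (Box C a)"
  shows "provable_from X D \<Gamma> (Box (\<Union>(fst ` set ps)) (Conj (map snd ps)))"
  using assms
proof (induction ps)
  case Nil
  then show ?case using provable_from_derivable[OF derivable.C3] by simp
next
  case (Cons p ps)
  have "fst p \<inter> fst q = {}" if "q \<in> set ps" for q
    using Cons.prems(1,2) that unfolding pairwise_def by (metis distinct.simps(2) list.set_intros)
  then have "fst p \<inter> \<Union>(fst ` set ps) = {}" by blast
  moreover have "provable_from X D \<Gamma> (Box (\<Union>(fst ` set ps)) (Conj (map snd ps)))"
    using Cons by (simp add: pairwise_insert)
  moreover have "provable_from X D \<Gamma> (Box (fst p) (snd p))"
    using Cons.prems(3) by (simp add: case_prod_beta)
  ultimately have "provable_from X D \<Gamma> (Box (fst p \<union> \<Union>(fst ` set ps)) (And (snd p) (Conj (map snd ps))))"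
    by (intro provable_from_Box_union)
  then show ?case by simp
qed

lemma consistent_subset: "consistent X D \<Gamma> \<Longrightarrow> \<Gamma>' \<subseteq> \<Gamma> \<Longrightarrow> consistent X D \<Gamma>'"
  unfolding consistent_def by blast

lemma consistent_provable_from_Neg:
  assumes "consistent X D \<Gamma>" and "provable_from X D \<Gamma> a" and "provable_from X D \<Gamma> (Neg a)"
  shows False
proof -
  have "provable_from X D \<Gamma> (Neg Top)"
    by (rule provable_from_taut_consequence[of "[a, Neg a]"]) (use assms in auto)
  then obtain as where as: "set as \<subseteq> \<Gamma>" "derivable X D (Imp (Conj as) (Neg Top))"
    unfolding provable_from_def by blast
  then have "derivable X D (Neg (Conj as))"
    by (intro derivable_taut_consequence[of "[Imp (Conj as) (Neg Top)]"])
       (use derivable_wf[OF as(2)] in \<open>auto simp: Imp_def\<close>)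
  then show False using as(1) assms(1) unfolding consistent_def by blast
qed

lemma consistent_mem_NegD: "consistent X D \<Gamma> \<Longrightarrow> a \<in> \<Gamma> \<Longrightarrow> wf X D a \<Longrightarrow> Neg a \<notin> \<Gamma>"
  using consistent_provable_from_Neg[of X D \<Gamma> a] provable_from_mem[of _ \<Gamma> X D] by auto

lemma not_consistent_insertD:
  assumes "\<not> consistent X D (insert b \<Gamma>)" and "wf X D b"
  shows "provable_from X D \<Gamma> (Neg b)"
proof -
  obtain as where as: "set as \<subseteq> insert b \<Gamma>" "derivable X D (Neg (Conj as))"
    using assms(1) unfolding consistent_def by blast
  define as' where "as' = filter (\<lambda>a. a \<noteq> b) as"
  have "derivable X D (Imp (Conj as') (Neg b))"
    by (rule derivable_taut_consequence[of "[Neg (Conj as)]"])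
       (use as derivable_wf[OF as(2)] assms(2) in \<open>auto simp: as'_def Imp_def wf_Conj peval_Conj\<close>)
  moreover have "set as' \<subseteq> \<Gamma>" using as(1) by (auto simp: as'_def)
  ultimately show ?thesis unfolding provable_from_def by blast
qed

lemma consistent_insert_or_insert_Neg:
  assumes "consistent X D \<Gamma>" and "wf X D a"
  shows "consistent X D (insert a \<Gamma>) \<or> consistent X D (insert (Neg a) \<Gamma>)"
proof (rule ccontr)
  assume "\<not> ?thesis"
  then have "provable_from X D \<Gamma> (Neg a)" "provable_from X D \<Gamma> (Neg (Neg a))"
    using not_consistent_insertD[of X D a \<Gamma>] not_consistent_insertD[of X D "Neg a" \<Gamma>] assms(2)
    by auto
  then show False using consistent_provable_from_Neg[OF assms(1)] by blast
qed

lemma consistent_extend_complete: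
  assumes "finite L" and "\<forall>a\<in>L. wf X D a" and "consistent X D \<Gamma>"
  shows "\<exists>\<Delta> \<subseteq> L \<union> Neg ` L. (\<forall>a\<in>L. a \<in> \<Delta> \<or> Neg a \<in> \<Delta>) \<and> consistent X D (\<Delta> \<union> \<Gamma>)"
  using assms
proof (induction L rule: finite_induct)
  case empty
  then show ?case by auto
next
  case (insert a L)
  obtain \<Delta> where \<Delta>: "\<Delta> \<subseteq> L \<union> Neg ` L" "\<forall>a\<in>L. a \<in> \<Delta> \<or> Neg a \<in> \<Delta>"
    "consistent X D (\<Delta> \<union> \<Gamma>)"
    using insert.IH insert.prems by blast
  have "wf X D a" using insert.prems(1) by blast
  then consider "consistent X D (insert a \<Delta> \<union> \<Gamma>)" | "consistent X D (insert (Neg a) \<Delta> \<union> \<Gamma>)"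
    using consistent_insert_or_insert_Neg[OF \<Delta>(3)] by (metis Un_insert_left)
  then show ?case
  proof cases
    case 1
    then show ?thesis using \<Delta> by (intro exI[of _ "insert a \<Delta>"] conjI) blast+
  next
    case 2
    then show ?thesis using \<Delta> by (intro exI[of _ "insert (Neg a) \<Delta>"] conjI) blast+
  qed
qed

locale formula_closure =
  fixes X :: "'x set" and D :: "'x \<Rightarrow> 'c set" and K :: "('ag::finite, 'x, 'c) fm set"
  assumes typed_sig: "typed_sig X D"
    and finite_closure: "finite K"
    and wf_closure: "a \<in> K \<Longrightarrow> wf X D a"
    and Neg_closed: "Neg a \<in> K \<Longrightarrow> a \<in> K"
    and And_closed: "And a b \<in> K \<Longrightarrow> a \<in> K \<and> b \<in> K"
    and Box_closed: "Box C a \<in> K \<Longrightarrow> a \<in> K"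
    and Atom_closed: "x \<in> X \<Longrightarrow> c \<in> D x \<Longrightarrow> Atom x c \<in> K"
begin

definition atom :: "('ag, 'x, 'c) fm set \<Rightarrow> bool" where
  "atom \<Delta> \<longleftrightarrow> \<Delta> \<subseteq> K \<union> Neg ` K \<and> (\<forall>a\<in>K. a \<in> \<Delta> \<or> Neg a \<in> \<Delta>) \<and> consistent X D \<Delta>"

lemma atom_consistent: "atom \<Delta> \<Longrightarrow> consistent X D \<Delta>"
  unfolding atom_def by blast

lemma atom_Box_closure: "atom \<Delta> \<Longrightarrow> Box C a \<in> \<Delta> \<Longrightarrow> Box C a \<in> K"
  unfolding atom_def by blast

lemma atom_wf: "atom \<Delta> \<Longrightarrow> a \<in> \<Delta> \<Longrightarrow> wf X D a"
  unfolding atom_def using wf_closure by fastforce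

lemma lindenbaum:
  assumes "consistent X D \<Gamma>"
  obtains \<Delta> where "atom \<Delta>" and "consistent X D (\<Delta> \<union> \<Gamma>)"
proof -
  obtain \<Delta> where \<Delta>: "\<Delta> \<subseteq> K \<union> Neg ` K" "\<forall>a\<in>K. a \<in> \<Delta> \<or> Neg a \<in> \<Delta>"
    "consistent X D (\<Delta> \<union> \<Gamma>)"
    using consistent_extend_complete[OF finite_closure _ assms] wf_closure by blast
  then have "atom \<Delta>" unfolding atom_def using consistent_subset by blast
  show ?thesis using \<open>atom \<Delta>\<close> \<Delta>(3) by (rule that)
qed

lemma finite_atoms: "finite (Collect atom)"
  by (rule finite_subset[of _ "Pow (K \<union> Neg ` K)"]) (auto simp: atom_def finite_closure)

lemma atom_Neg_iff:
  assumes "atom \<Delta>" and "a \<in> K"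
  shows "Neg a \<in> \<Delta> \<longleftrightarrow> a \<notin> \<Delta>"
  using consistent_mem_NegD[OF atom_consistent[OF assms(1)], of a] wf_closure[OF assms(2)] assms
  unfolding atom_def by blast

lemma atom_provable_from_mem:
  assumes "atom \<Delta>" and "a \<in> K" and "provable_from X D \<Delta> a"
  shows "a \<in> \<Delta>"
proof (rule ccontr)
  assume "a \<notin> \<Delta>"
  then have "provable_from X D \<Delta> (Neg a)"
    using atom_Neg_iff[OF assms(1,2)] provable_from_mem[of "Neg a" \<Delta> X D] wf_closure[OF assms(2)]
    by simp
  then show False using consistent_provable_from_Neg[OF atom_consistent] assms by blast
qed

lemma atom_Top: "atom \<Delta> \<Longrightarrow> Top \<in> K \<Longrightarrow> Top \<in> \<Delta>"
  using atom_provable_from_mem provable_from_derivable[OF derivable.Taut[of X D Top]]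
  by (simp add: taut_def) blast

lemma atom_And_iff:
  assumes "atom \<Delta>" and "And a b \<in> K"
  shows "And a b \<in> \<Delta> \<longleftrightarrow> a \<in> \<Delta> \<and> b \<in> \<Delta>"
proof -
  have K: "a \<in> K" "b \<in> K" using And_closed[OF assms(2)] by auto
  have wf: "wf X D a" "wf X D b" using K wf_closure by auto
  show ?thesis
  proof safe
    assume "And a b \<in> \<Delta>"
    then have ab: "provable_from X D \<Delta> (And a b)"
      using provable_from_mem[of "And a b" \<Delta> X D] wf by simp
    have "provable_from X D \<Delta> a"
      by (rule provable_from_taut_consequence[of "[And a b]"]) (use ab wf in simp_all)
    moreover have "provable_from X D \<Delta> b"
      by (rule provable_from_taut_consequence[of "[And a b]"]) (use ab wf in simp_all)
    ultimately show "a \<in> \<Delta>" "b \<in> \<Delta>" using atom_provable_from_mem[OF assms(1)] K by auto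
  next
    assume a: "a \<in> \<Delta>" and b: "b \<in> \<Delta>"
    have "provable_from X D \<Delta> (And a b)"
      by (rule provable_from_taut_consequence[of "[a, b]"])
         (use provable_from_mem[OF a wf(1)] provable_from_mem[OF b wf(2)] wf in simp_all)
    then show "And a b \<in> \<Delta>" using atom_provable_from_mem[OF assms] by blast
  qed
qed

lemma atom_mem_if_consistent_union:
  assumes "atom \<Delta>" and "consistent X D (\<Delta> \<union> \<Gamma>)" and "a \<in> \<Gamma>" and "a \<in> K"
  shows "a \<in> \<Delta>"
  using consistent_mem_NegD[OF assms(2), of a] atom_Neg_iff[OF assms(1,4)] assms(3,4) wf_closure
  by blast

lemma atom_not_mem_if_consistent_union:
  assumes "consistent X D (\<Delta> \<union> \<Gamma>)" and "Neg a \<in> \<Gamma>" and "a \<in> K"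
  shows "a \<notin> \<Delta>"
  using consistent_mem_NegD[OF assms(1), of a] assms(2,3) wf_closure by blast

section \<open>The canonical model\<close>

lemma atom_ex_Atom:
  assumes "atom \<Delta>" and "x \<in> X"
  shows "\<exists>c\<in>D x. Atom x c \<in> \<Delta>"
proof (rule ccontr)
  assume "\<not> ?thesis"
  then have neg: "Neg (Atom x c) \<in> \<Delta>" if "c \<in> D x" for c
    using that atom_Neg_iff[OF assms(1) Atom_closed[OF assms(2) that]] by blast
  have "finite (D x)" using typed_sig assms(2) by (simp add: typed_sig_def)
  then obtain cs where cs: "set cs = D x" using finite_list by blast
  have "derivable X D (Disj (map (Atom x) cs))"
    by (rule derivable.Ex[where X = X and D = D]) (use assms(2) cs in simp_all)
  then have "derivable X D (Neg (Conj (map (\<lambda>c. Neg (Atom x c)) cs)))"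
    by (intro derivable_taut_consequence[of "[Disj (map (Atom x) cs)]"])
       (use assms(2) cs in \<open>auto simp: peval_Disj peval_Conj wf_Conj\<close>)
  moreover have "set (map (\<lambda>c. Neg (Atom x c)) cs) \<subseteq> \<Delta>" using neg cs by auto
  ultimately show False using atom_consistent[OF assms(1)] unfolding consistent_def by blast
qed

lemma atom_Atom_unique:
  assumes "atom \<Delta>" and "x \<in> X" and "c \<in> D x" and "d \<in> D x"
    and "Atom x c \<in> \<Delta>" and "Atom x d \<in> \<Delta>"
  shows "c = d"
proof (rule ccontr)
  assume "c \<noteq> d"
  then have "provable_from X D \<Delta> (Imp (Atom x c) (Neg (Atom x d)))"
    by (intro provable_from_derivable derivable.Uq[where X = X and D = D]) (use assms in simp_all)
  moreover have "provable_from X D \<Delta> (Atom x c)" using provable_from_mem[OF assms(5)] assms(2,3) by simp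
  ultimately have "provable_from X D \<Delta> (Neg (Atom x d))" by (rule provable_from_mp[rotated])
  moreover have "provable_from X D \<Delta> (Atom x d)" using provable_from_mem[OF assms(6)] assms(2,4) by simp
  ultimately show False using consistent_provable_from_Neg[OF atom_consistent[OF assms(1)]] by blast
qed

definition box_pairs :: "('ag set \<times> ('ag, 'x, 'c) fm) set" where
  "box_pairs = case_prod Box -` K"

lemma finite_box_pairs: "finite box_pairs"
  unfolding box_pairs_def by (rule finite_vimageI[OF finite_closure]) (auto simp: inj_def)

definition box_index :: "'ag set \<times> ('ag, 'x, 'c) fm \<Rightarrow> nat" where
  "box_index = to_nat_on box_pairs"

lemma inj_on_box_index: "inj_on box_index box_pairs"
  unfolding box_index_def by (intro inj_on_to_nat_on countable_finite finite_box_pairs)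

text \<open>First strategy components: 0 abstains, \<open>Suc (box_index (C, a))\<close> votes for \<open>Box C a\<close>.\<close>

definition requirements :: "('ag, 'x, 'c) fm set \<Rightarrow> ('ag \<Rightarrow> nat) \<Rightarrow> ('ag set \<times> ('ag, 'x, 'c) fm) set" where
  "requirements \<Gamma> \<pi> =
     {(C, a). Box C a \<in> \<Gamma> \<and> (\<forall>i\<in>C. \<pi> i = Suc (box_index (C, a)))} \<union>
     {({}, Neg a) | a. Box UNIV a \<in> K \<and> Box UNIV a \<notin> \<Gamma>}"

lemma finite_requirements:
  assumes "atom \<Gamma>"
  shows "finite (requirements \<Gamma> \<pi>)"
proof (rule finite_subset)
  show "requirements \<Gamma> \<pi> \<subseteq> box_pairs \<union> (\<lambda>(C, a). ({}, Neg a)) ` box_pairs"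
    using atom_Box_closure[OF assms] by (force simp: requirements_def box_pairs_def)
  show "finite (box_pairs \<union> (\<lambda>(C, a). ({}, Neg a)) ` box_pairs)"
    using finite_box_pairs by blast
qed

lemma requirements_disjoint:
  assumes "atom \<Gamma>" and "p \<in> requirements \<Gamma> \<pi>" and "q \<in> requirements \<Gamma> \<pi>" and "p \<noteq> q"
  shows "fst p \<inter> fst q = {}"
proof (rule ccontr)
  assume "fst p \<inter> fst q \<noteq> {}"
  then obtain i where i: "i \<in> fst p" "i \<in> fst q" by blast
  have vote: "r \<in> box_pairs \<and> \<pi> i = Suc (box_index r)"
    if "r \<in> requirements \<Gamma> \<pi>" and "i \<in> fst r" for r
    using that atom_Box_closure[OF assms(1)] by (auto simp: requirements_def box_pairs_def)
  have "p \<in> box_pairs" "q \<in> box_pairs" "box_index p = box_index q"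
    using vote[OF assms(2) i(1)] vote[OF assms(3) i(2)] by simp_all
  then show False using assms(4) inj_on_box_index by (auto dest: inj_onD)
qed

lemma requirements_provable_from:
  assumes "atom \<Gamma>" and "(C, a) \<in> requirements \<Gamma> \<pi>"
  shows "provable_from X D \<Gamma> (Box C a)"
proof (cases "Box C a \<in> \<Gamma>")
  case True
  then show ?thesis using provable_from_mem atom_wf[OF assms(1)] by blast
next
  case False
  then obtain b where b: "C = {}" "a = Neg b" "Box UNIV b \<in> K" "Box UNIV b \<notin> \<Gamma>"
    using assms(2) by (auto simp: requirements_def)
  have wf: "wf X D b" using wf_closure[OF b(3)] by simp
  have "provable_from X D \<Gamma> (Neg (Box UNIV b))"
    using atom_Neg_iff[OF assms(1) b(3)] b(4) provable_from_mem[of "Neg (Box UNIV b)" \<Gamma> X D] wf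
    by simp
  moreover have "provable_from X D \<Gamma> (Imp (Neg (Box {} (Neg b))) (Box UNIV b))"
    using provable_from_derivable[OF derivable.C5[OF wf]] .
  ultimately have "provable_from X D \<Gamma> (Box {} (Neg b))"
    by (intro provable_from_taut_consequence
          [of "[Neg (Box UNIV b), Imp (Neg (Box {} (Neg b))) (Box UNIV b)]"])
       (simp_all add: wf Imp_def, blast)
  then show ?thesis using b(1,2) by simp
qed

lemma provable_from_Box_requirements:
  assumes "atom \<Gamma>" and "set as \<subseteq> snd ` requirements \<Gamma> \<pi>"
  shows "provable_from X D \<Gamma> (Box (\<Union>(fst ` requirements \<Gamma> \<pi>)) (Conj as))"
proof -
  obtain ps where ps: "distinct ps" "set ps = requirements \<Gamma> \<pi>"
    using finite_distinct_list[OF finite_requirements[OF assms(1)]] by blast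
  have "pairwise (\<lambda>p q. fst p \<inter> fst q = {}) (set ps)"
    unfolding pairwise_def ps(2) using requirements_disjoint[OF assms(1)] by blast
  moreover have "\<forall>(C, a)\<in>set ps. provable_from X D \<Gamma> (Box C a)"
    unfolding ps(2) using requirements_provable_from[OF assms(1)] by blast
  ultimately have Box: "provable_from X D \<Gamma> (Box (\<Union>(fst ` requirements \<Gamma> \<pi>)) (Conj (map snd ps)))"
    using provable_from_Box_Conj[OF ps(1)] by (simp only: ps(2))
  have "derivable X D (Imp (Conj (map snd ps)) (Conj as))"
  proof (rule derivable_taut_consequence[of "[]"])
    show "wf X D (Imp (Conj (map snd ps)) (Conj as))"
      using provable_from_wf[OF Box] assms(2) ps(2) by (auto simp: Imp_def wf_Conj)
    show "\<forall>v. (\<forall>d\<in>set []. peval v d) \<longrightarrow> peval v (Imp (Conj (map snd ps)) (Conj as))"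
      using assms(2) ps(2) by (auto simp: Imp_def peval_Conj)
  qed simp
  then show ?thesis using provable_from_Box_mono Box by blast
qed

lemma consistent_requirements:
  assumes "atom \<Gamma>"
  shows "consistent X D (snd ` requirements \<Gamma> \<pi>)"
  unfolding consistent_def
proof
  assume "\<exists>as. set as \<subseteq> snd ` requirements \<Gamma> \<pi> \<and> derivable X D (Neg (Conj as))"
  then obtain as where as: "set as \<subseteq> snd ` requirements \<Gamma> \<pi>" "derivable X D (Neg (Conj as))"
    by blast
  have "derivable X D (Imp (Conj as) Bot)"
    by (rule derivable_taut_consequence[of "[Neg (Conj as)]"])
       (use as derivable_wf[OF as(2)] in \<open>simp_all add: Imp_def Bot_def\<close>)
  then have "provable_from X D \<Gamma> (Box (\<Union>(fst ` requirements \<Gamma> \<pi>)) Bot)"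
    using provable_from_Box_mono provable_from_Box_requirements[OF assms as(1)] by blast
  then show False
    using consistent_provable_from_Neg[OF atom_consistent[OF assms]]
      provable_from_derivable[OF derivable.C2] by blast
qed

lemma consistent_requirements_insert_Neg:
  assumes "atom \<Gamma>" and "Box C a \<in> K" and "Box C a \<notin> \<Gamma>" and "\<forall>i. i \<notin> C \<longrightarrow> \<pi> i = 0"
  shows "consistent X D (insert (Neg a) (snd ` requirements \<Gamma> \<pi>))"
proof (rule ccontr)
  assume "\<not> ?thesis"
  then have "provable_from X D (snd ` requirements \<Gamma> \<pi>) (Neg (Neg a))"
    using not_consistent_insertD[of X D "Neg a"] wf_closure[OF assms(2)] by simp
  then obtain as where as: "set as \<subseteq> snd ` requirements \<Gamma> \<pi>" "derivable X D (Imp (Conj as) (Neg (Neg a)))"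
    unfolding provable_from_def by blast
  have "derivable X D (Imp (Conj as) a)"
    by (rule derivable_taut_consequence[of "[Imp (Conj as) (Neg (Neg a))]"])
       (use as derivable_wf[OF as(2)] in \<open>simp_all add: Imp_def\<close>)
  then have "provable_from X D \<Gamma> (Box (\<Union>(fst ` requirements \<Gamma> \<pi>)) a)"
    by (rule provable_from_Box_mono[OF _ provable_from_Box_requirements[OF assms(1) as(1)]])
  moreover have "\<Union>(fst ` requirements \<Gamma> \<pi>) \<subseteq> C"
  proof
    fix i
    assume "i \<in> \<Union>(fst ` requirements \<Gamma> \<pi>)"
    then obtain C' b where "(C', b) \<in> requirements \<Gamma> \<pi>" "i \<in> C'" by auto
    then have "\<pi> i \<noteq> 0" unfolding requirements_def by auto
    then show "i \<in> C" using assms(4) by auto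
  qed
  ultimately have "provable_from X D \<Gamma> (Box C a)" by (rule provable_from_Box_superset[rotated])
  then show False using atom_provable_from_mem[OF assms(1,2)] assms(3) by blast
qed

definition successors :: "('ag, 'x, 'c) fm set \<Rightarrow> ('ag \<Rightarrow> nat) \<Rightarrow> ('ag, 'x, 'c) fm set set" where
  "successors \<Gamma> \<pi> = {\<Delta>. atom \<Delta> \<and> consistent X D (\<Delta> \<union> snd ` requirements \<Gamma> \<pi>)}"

text \<open>An agent outside a coalition can choose its second component so that the sum hits
  the index of any admissible successor.\<close>

definition canon_out :: "('ag, 'x, 'c) fm set \<Rightarrow> ('ag \<Rightarrow> nat \<times> nat) \<Rightarrow> ('ag, 'x, 'c) fm set" where
  "canon_out \<Gamma> \<sigma> =
     (let S = successors \<Gamma> (\<lambda>i. fst (\<sigma> i)) in from_nat_into S ((\<Sum>i\<in>UNIV. snd (\<sigma> i)) mod card S))"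

definition canon_val :: "'x \<Rightarrow> 'c \<Rightarrow> ('ag, 'x, 'c) fm set set" where
  "canon_val x c = {\<Delta>. atom \<Delta> \<and> Atom x c \<in> \<Delta>}"

lemma finite_successors: "finite (successors \<Gamma> \<pi>)"
  by (rule finite_subset[OF _ finite_atoms]) (auto simp: successors_def)

lemma successors_nonempty:
  assumes "atom \<Gamma>"
  shows "successors \<Gamma> \<pi> \<noteq> {}"
proof -
  obtain \<Delta> where "atom \<Delta>" "consistent X D (\<Delta> \<union> snd ` requirements \<Gamma> \<pi>)"
    using lindenbaum[OF consistent_requirements[OF assms]] .
  then show ?thesis by (auto simp: successors_def)
qed

lemma canon_out_successor: "atom \<Gamma> \<Longrightarrow> canon_out \<Gamma> \<sigma> \<in> successors \<Gamma> (\<lambda>i. fst (\<sigma> i))"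
  unfolding canon_out_def Let_def by (rule from_nat_into[OF successors_nonempty])

lemma canon_out_atom: "atom \<Gamma> \<Longrightarrow> atom (canon_out \<Gamma> \<sigma>)"
  using canon_out_successor by (simp add: successors_def)

lemma canon_out_Box:
  assumes "atom \<Gamma>" and "Box C a \<in> \<Gamma>"
  shows "\<exists>\<alpha>. \<forall>\<beta>. a \<in> canon_out \<Gamma> (\<lambda>i. if i \<in> C then \<alpha> i else \<beta> i)"
proof (intro exI[of _ "\<lambda>_. (Suc (box_index (C, a)), 0)"] allI)
  fix \<beta> :: "'ag \<Rightarrow> nat \<times> nat"
  let ?\<sigma> = "\<lambda>i. if i \<in> C then (Suc (box_index (C, a)), 0) else \<beta> i"
  have "(C, a) \<in> requirements \<Gamma> (\<lambda>i. fst (?\<sigma> i))"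
    using assms(2) by (simp add: requirements_def)
  then have "a \<in> snd ` requirements \<Gamma> (\<lambda>i. fst (?\<sigma> i))" by (rule rev_image_eqI) simp
  moreover have "consistent X D (canon_out \<Gamma> ?\<sigma> \<union> snd ` requirements \<Gamma> (\<lambda>i. fst (?\<sigma> i)))"
    using canon_out_successor[OF assms(1), of ?\<sigma>] by (simp add: successors_def)
  moreover have "a \<in> K" using Box_closed atom_Box_closure[OF assms] .
  ultimately show "a \<in> canon_out \<Gamma> ?\<sigma>"
    using atom_mem_if_consistent_union[OF canon_out_atom[OF assms(1)]] by blast
qed

lemma canon_out_steer:
  assumes "j \<notin> C" and "\<Delta> \<in> successors \<Gamma> (\<lambda>i. if i \<in> C then fst (\<alpha> i) else 0)"
  shows "\<exists>\<beta>. canon_out \<Gamma> (\<lambda>i. if i \<in> C then \<alpha> i else \<beta> i) = \<Delta>"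
proof -
  define S where "S = successors \<Gamma> (\<lambda>i. if i \<in> C then fst (\<alpha> i) else 0)"
  have "finite S" unfolding S_def by (rule finite_successors)
  define n where "n = to_nat_on S \<Delta>"
  have "n < card S"
    using bij_betw_apply[OF to_nat_on_finite[OF \<open>finite S\<close>]] assms(2) by (simp add: n_def S_def)
  define s where "s = (\<Sum>i\<in>C. snd (\<alpha> i))"
  define t where "t = n + (card S - 1) * s"
  define \<beta> where "\<beta> = (\<lambda>i. (0::nat, if i = j then t else 0))"
  let ?\<sigma> = "\<lambda>i. if i \<in> C then \<alpha> i else \<beta> i"
  have fst_eq: "(\<lambda>i. fst (?\<sigma> i)) = (\<lambda>i. if i \<in> C then fst (\<alpha> i) else 0)"
    by (auto simp: \<beta>_def)
  have "(\<Sum>i\<in>UNIV. snd (?\<sigma> i)) = s + (\<Sum>i\<in>-C. snd (\<beta> i))"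
    by (simp add: if_distrib sum.If_cases s_def)
  also have "\<dots> = s + t" using assms(1) by (simp add: \<beta>_def sum.delta)
  also have "\<dots> = n + card S * s" using \<open>n < card S\<close> by (cases "card S") (simp_all add: t_def)
  finally have sum_eq: "(\<Sum>i\<in>UNIV. snd (?\<sigma> i)) mod card S = n" using \<open>n < card S\<close> by simp
  have "canon_out \<Gamma> ?\<sigma> = from_nat_into S n"
    unfolding canon_out_def Let_def fst_eq S_def[symmetric] sum_eq ..
  also have "\<dots> = \<Delta>"
    using from_nat_into_to_nat_on[OF countable_finite[OF \<open>finite S\<close>]] assms(2)
    by (simp add: n_def S_def)
  finally show ?thesis by blast
qed

lemma canon_out_not_Box:
  assumes "atom \<Gamma>" and "Box C a \<in> K" and "Box C a \<notin> \<Gamma>"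
  shows "\<exists>\<beta>. a \<notin> canon_out \<Gamma> (\<lambda>i. if i \<in> C then \<alpha> i else \<beta> i)"
proof (cases "C = UNIV")
  case True
  have "({}, Neg a) \<in> requirements \<Gamma> (\<lambda>i. fst (\<alpha> i))"
    using True assms(2,3) by (auto simp: requirements_def)
  then have "Neg a \<in> snd ` requirements \<Gamma> (\<lambda>i. fst (\<alpha> i))" by (rule rev_image_eqI) simp
  moreover have "consistent X D (canon_out \<Gamma> \<alpha> \<union> snd ` requirements \<Gamma> (\<lambda>i. fst (\<alpha> i)))"
    using canon_out_successor[OF assms(1), of \<alpha>] by (simp add: successors_def)
  ultimately have "a \<notin> canon_out \<Gamma> \<alpha>"
    using atom_not_mem_if_consistent_union Box_closed[OF assms(2)] by blast
  then show ?thesis using True by simp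
next
  case False
  then obtain j where j: "j \<notin> C" by blast
  define \<pi> where "\<pi> = (\<lambda>i. if i \<in> C then fst (\<alpha> i) else 0)"
  have "consistent X D (insert (Neg a) (snd ` requirements \<Gamma> \<pi>))"
    using consistent_requirements_insert_Neg[OF assms] by (simp add: \<pi>_def)
  then obtain \<Delta> where \<Delta>: "atom \<Delta>" "consistent X D (\<Delta> \<union> insert (Neg a) (snd ` requirements \<Gamma> \<pi>))"
    using lindenbaum by blast
  have "consistent X D (\<Delta> \<union> snd ` requirements \<Gamma> \<pi>)" by (rule consistent_subset[OF \<Delta>(2)]) blast
  then have "\<Delta> \<in> successors \<Gamma> (\<lambda>i. if i \<in> C then fst (\<alpha> i) else 0)"
    using \<Delta>(1) by (simp add: successors_def \<pi>_def)
  then obtain \<beta> where "canon_out \<Gamma> (\<lambda>i. if i \<in> C then \<alpha> i else \<beta> i) = \<Delta>"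
    using canon_out_steer[OF j] by blast
  moreover have "a \<notin> \<Delta>" using atom_not_mem_if_consistent_union[OF \<Delta>(2)] Box_closed[OF assms(2)] by blast
  ultimately show ?thesis by blast
qed

lemma truth_lemma:
  assumes "atom \<Gamma>" and "a \<in> K"
  shows "sat (\<lambda>_. UNIV) canon_out canon_val \<Gamma> a \<longleftrightarrow> a \<in> \<Gamma>"
  using assms
proof (induction a arbitrary: \<Gamma>)
  case Top
  then show ?case by (simp add: atom_Top)
next
  case (Atom x c)
  then show ?case by (simp add: canon_val_def)
next
  case (Neg a)
  have "a \<in> K" using Neg_closed[OF Neg.prems(2)] .
  then show ?case using Neg.IH[OF Neg.prems(1)] atom_Neg_iff[OF Neg.prems(1)] by simp
next
  case (And a b)
  have "a \<in> K" "b \<in> K" using And_closed[OF And.prems(2)] by auto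
  then show ?case using And.IH[OF And.prems(1)] atom_And_iff[OF And.prems] by simp
next
  case (Box C a)
  have IH: "sat (\<lambda>_. UNIV) canon_out canon_val (canon_out \<Gamma> \<sigma>) a \<longleftrightarrow> a \<in> canon_out \<Gamma> \<sigma>" for \<sigma>
    using Box.IH canon_out_atom[OF Box.prems(1)] Box_closed[OF Box.prems(2)] .
  have "sat (\<lambda>_. UNIV) canon_out canon_val \<Gamma> (Box C a) \<longleftrightarrow>
      (\<exists>\<alpha>. \<forall>\<beta>. a \<in> canon_out \<Gamma> (\<lambda>i. if i \<in> C then \<alpha> i else \<beta> i))"
    by (simp add: IH)
  also have "\<dots> \<longleftrightarrow> Box C a \<in> \<Gamma>"
    using canon_out_Box[OF Box.prems(1)] canon_out_not_Box[OF Box.prems] by blast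
  finally show ?case .
qed

lemma cl_model_canon: "atom \<Gamma> \<Longrightarrow> cl_model (Collect atom) (\<lambda>_. UNIV) canon_out canon_val"
  unfolding cl_model_def by (auto simp: canon_out_atom canon_val_def)

lemma coherent_canon: "coherent X D (Collect atom) canon_val"
  unfolding coherent_def canon_val_def using atom_ex_Atom atom_Atom_unique by blast

lemma exists_atom_not_mem:
  assumes "a \<in> K" and "\<not> derivable X D a"
  obtains \<Delta> where "atom \<Delta>" and "a \<notin> \<Delta>"
proof -
  have wf: "wf X D a" using wf_closure[OF assms(1)] .
  have "consistent X D {Neg a}"
  proof (rule ccontr)
    assume "\<not> consistent X D {Neg a}"
    then have "provable_from X D {} (Neg (Neg a))" using not_consistent_insertD[of X D "Neg a" "{}"] wf by simp
    then have "derivable X D (Imp Top (Neg (Neg a)))" by (simp add: provable_from_def)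
    then have "derivable X D a"
      by (intro derivable_taut_consequence[of "[Imp Top (Neg (Neg a))]"]) (simp_all add: wf Imp_def)
    then show False using assms(2) by contradiction
  qed
  then obtain \<Delta> where "atom \<Delta>" "consistent X D (\<Delta> \<union> {Neg a})" by (rule lindenbaum)
  then show ?thesis using that atom_not_mem_if_consistent_union assms(1) by blast
qed

end

section \<open>Embedding models into other types\<close>

lemma sat_transfer:
  fixes f :: "'s1 \<Rightarrow> 's2" and g :: "'a1 \<Rightarrow> 'a2"
  assumes "cl_model S (\<lambda>_. UNIV) out V" and "inj_on f S" and "inj g" and "s \<in> S"
  shows "sat (\<lambda>_. range g) (\<lambda>s' \<sigma>'. f (out (inv_into S f s') (\<lambda>i. inv g (\<sigma>' i)))) (\<lambda>x c. f ` V x c)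
      (f s) a \<longleftrightarrow> sat (\<lambda>_. UNIV) out V s a"
  using assms(4)
proof (induction a arbitrary: s)
  case (Atom x c)
  have "V x c \<subseteq> S" using assms(1) by (simp add: cl_model_def)
  then show ?case using inj_on_image_mem_iff[OF assms(2)] Atom by simp
next
  case (Box C a)
  let ?out = "\<lambda>s' \<sigma>'. f (out (inv_into S f s') (\<lambda>i. inv g (\<sigma>' i)))"
  let ?sat = "sat (\<lambda>_. range g) ?out (\<lambda>x c. f ` V x c)"
  have IH: "?sat (?out (f s) \<sigma>') a \<longleftrightarrow> sat (\<lambda>_. UNIV) out V (out s (\<lambda>i. inv g (\<sigma>' i))) a" for \<sigma>'
    using Box.IH assms(1) Box.prems inv_into_f_f[OF assms(2) Box.prems]
    by (simp add: cl_model_def profile_def)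
  have inv_g: "(\<lambda>i. inv g (if i \<in> C then \<alpha>' i else g (\<beta> i))) = (\<lambda>i. if i \<in> C then inv g (\<alpha>' i) else \<beta> i)"
    "(\<lambda>i. inv g (if i \<in> C then g (\<alpha> i) else \<beta>' i)) = (\<lambda>i. if i \<in> C then \<alpha> i else inv g (\<beta>' i))"
    for \<alpha> \<alpha>' \<beta> \<beta>'
    using inv_f_f[OF assms(3)] by auto
  show ?case
  proof
    assume "?sat (f s) (Box C a)"
    then obtain \<alpha>' where \<alpha>': "\<And>\<beta>'. \<forall>i\<in>-C. \<beta>' i \<in> range g \<Longrightarrow>
        ?sat (?out (f s) (\<lambda>i. if i \<in> C then \<alpha>' i else \<beta>' i)) a"
      by auto
    have "sat (\<lambda>_. UNIV) out V (out s (\<lambda>i. if i \<in> C then inv g (\<alpha>' i) else \<beta> i)) a" for \<beta>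
      using IH[of "\<lambda>i. if i \<in> C then \<alpha>' i else g (\<beta> i)"] \<alpha>'[of "\<lambda>i. g (\<beta> i)"]
      unfolding inv_g(1) by simp
    then show "sat (\<lambda>_. UNIV) out V s (Box C a)"
      unfolding sat.simps(5) by (intro exI[of _ "\<lambda>i. inv g (\<alpha>' i)"]) simp
  next
    assume "sat (\<lambda>_. UNIV) out V s (Box C a)"
    then obtain \<alpha> where \<alpha>: "\<And>\<beta>. sat (\<lambda>_. UNIV) out V (out s (\<lambda>i. if i \<in> C then \<alpha> i else \<beta> i)) a"
      by auto
    have "?sat (?out (f s) (\<lambda>i. if i \<in> C then g (\<alpha> i) else \<beta>' i)) a" for \<beta>'
      using IH[of "\<lambda>i. if i \<in> C then g (\<alpha> i) else \<beta>' i"] \<alpha>[of "\<lambda>i. inv g (\<beta>' i)"]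
      unfolding inv_g(2) by simp
    then show "?sat (f s) (Box C a)"
      unfolding sat.simps(5) by (intro exI[of _ "\<lambda>i. g (\<alpha> i)"]) simp
  qed
qed simp_all

lemma not_coh_valid_if_countermodel:
  fixes S :: "'s0 set" and out :: "'s0 \<Rightarrow> ('ag \<Rightarrow> 'a0::countable) \<Rightarrow> 's0"
  assumes "cl_model S (\<lambda>_. UNIV) out V" and "coherent X D S V" and "countable S"
    and "s \<in> S" and "\<not> sat (\<lambda>_. UNIV) out V s a"
  shows "\<not> coh_valid X D TYPE('s::infinite) TYPE('a::infinite) a"
proof -
  obtain hs :: "nat \<Rightarrow> 's" where hs: "inj hs"
    using infinite_countable_subset[OF infinite_UNIV] by blast
  obtain ha :: "nat \<Rightarrow> 'a" where ha: "inj ha"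
    using infinite_countable_subset[OF infinite_UNIV] by blast
  define f :: "'s0 \<Rightarrow> 's" where "f = hs \<circ> to_nat_on S"
  define g :: "'a0 \<Rightarrow> 'a" where "g = ha \<circ> to_nat"
  have f: "inj_on f S"
    unfolding f_def using comp_inj_on[OF inj_on_to_nat_on[OF assms(3)]] hs inj_on_subset by blast
  have g: "inj g" unfolding g_def using ha by (simp add: inj_compose)
  define out' where "out' = (\<lambda>s' \<sigma>'. f (out (inv_into S f s') (\<lambda>i. inv g (\<sigma>' i))))"
  define V' where "V' = (\<lambda>x c. f ` V x c)"
  have "cl_model (f ` S) (\<lambda>_. range g) out' V'"
    unfolding cl_model_def
  proof (intro conjI allI ballI impI)
    show "f ` S \<noteq> {}" and "range g \<noteq> {}" using assms(4) by auto
  next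
    fix s' \<sigma>'
    assume "s' \<in> f ` S"
    then have "inv_into S f s' \<in> S" by (rule inv_into_into)
    then show "out' s' \<sigma>' \<in> f ` S" using assms(1) by (auto simp: cl_model_def profile_def out'_def)
  next
    fix x c
    have "V x c \<subseteq> S" using assms(1) by (simp add: cl_model_def)
    then show "V' x c \<subseteq> f ` S" unfolding V'_def by (rule image_mono)
  qed
  moreover have "coherent X D (f ` S) V'"
  proof -
    have "V x c \<subseteq> S" for x c using assms(1) by (simp add: cl_model_def)
    then have "t \<in> S \<Longrightarrow> f t \<in> V' x c \<longleftrightarrow> t \<in> V x c" for t x c
      using inj_on_image_mem_iff[OF f] by (simp add: V'_def)
    then show ?thesis using assms(2) by (auto simp: coherent_def)
  qed
  moreover have "\<not> sat (\<lambda>_. range g) out' V' (f s) a"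
    using sat_transfer[OF assms(1) f g assms(4)] assms(5) by (simp add: out'_def V'_def)
  ultimately show ?thesis using assms(4) unfolding coh_valid_def by blast
qed

fun subformulas :: "('ag, 'x, 'c) fm \<Rightarrow> ('ag, 'x, 'c) fm set" where
  "subformulas Top = {Top}"
| "subformulas (Atom x c) = {Atom x c}"
| "subformulas (Neg a) = insert (Neg a) (subformulas a)"
| "subformulas (And a b) = insert (And a b) (subformulas a \<union> subformulas b)"
| "subformulas (Box C a) = insert (Box C a) (subformulas a)"

lemma subformulas_refl: "a \<in> subformulas a"
  by (cases a) auto

lemma formula_closure_subformulas:
  assumes "typed_sig X D" and "wf X D \<chi>"
  shows "formula_closure X D (subformulas \<chi> \<union> {Atom x c | x c. x \<in> X \<and> c \<in> D x})"
proof
  have "finite (subformulas \<chi>)" by (induction \<chi>) auto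
  moreover have "{Atom x c | x c. x \<in> X \<and> c \<in> D x} = (\<lambda>(x, c). Atom x c) ` Sigma X D" by auto
  moreover have "finite (Sigma X D)" using assms(1) by (simp add: typed_sig_def)
  ultimately show "finite (subformulas \<chi> \<union> {Atom x c | x c. x \<in> X \<and> c \<in> D x})"
    by (metis finite_Un finite_imageI)
  show "wf X D a" if "a \<in> subformulas \<chi> \<union> {Atom x c | x c. x \<in> X \<and> c \<in> D x}" for a
    using that assms(2) by (induction \<chi>) auto
qed (use assms(1) in \<open>induct \<chi>; auto simp: subformulas_refl\<close>)+

theorem mainTheorem8:
  fixes X :: "'x set" and D :: "'x \<Rightarrow> 'c set" and \<chi> :: "('ag::finite, 'x, 'c) fm"
  assumes "typed_sig X D" and "wf X D \<chi>"
  shows "coh_valid X D TYPE('s::infinite) TYPE('a::infinite) \<chi> \<longleftrightarrow> derivable X D \<chi>"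
proof
  assume "derivable X D \<chi>"
  then show "coh_valid X D TYPE('s) TYPE('a) \<chi>" by (rule coh_valid_if_derivable)
next
  assume valid: "coh_valid X D TYPE('s) TYPE('a) \<chi>"
  show "derivable X D \<chi>"
  proof (rule ccontr)
    assume not_derivable: "\<not> derivable X D \<chi>"
    interpret formula_closure X D "subformulas \<chi> \<union> {Atom x c | x c. x \<in> X \<and> c \<in> D x}"
      using formula_closure_subformulas[OF assms] .
    have \<chi>: "\<chi> \<in> subformulas \<chi> \<union> {Atom x c | x c. x \<in> X \<and> c \<in> D x}"
      using subformulas_refl by blast
    obtain \<Delta> where \<Delta>: "atom \<Delta>" "\<chi> \<notin> \<Delta>" by (rule exists_atom_not_mem[OF \<chi> not_derivable])
    then have "\<not> sat (\<lambda>_. UNIV) canon_out canon_val \<Delta> \<chi>" using truth_lemma[OF \<Delta>(1) \<chi>] by simp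
    moreover have "\<Delta> \<in> Collect atom" using \<Delta>(1) by simp
    ultimately have "\<not> coh_valid X D TYPE('s) TYPE('a) \<chi>"
      using not_coh_valid_if_countermodel[OF cl_model_canon[OF \<Delta>(1)] coherent_canon
          countable_finite[OF finite_atoms]] by blast
    with valid show False by contradiction
  qed
qed

end
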